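(* Let $\varepsilon_1>0$. For a dataset $D=\{(x_i,y_i)\}_{i=1}^n$ with $x_i,y_i\in[0,1]$, let $S_{x^2}=\sum_i x_i^2$, $S_{x-x^2}=\sum_i (x_i-x_i^2)$, $S_{1-x}=\sum_i(1-x_i)$, and let $Z_{11},Z_{12},Z_{13}$ be i.i.d. $\mathrm{Lap}(1/\varepsilon_1)$ random variables. Then the randomized mechanism releasing $(\tilde S_{x^2},\tilde S_{x-x^2},\tilde S_{1-x})=(S_{x^2}+Z_{11},\,S_{x-x^2}+Z_{12},\,S_{1-x}+Z_{13})$ satisfies $\varepsilon_1$-differential privacy.
   Context: $\mathrm{Lap}(b)$ denotes the zero-mean Laplace distribution with density $\frac{1}{2b}e^{-|z|/b}$. Two datasets are neighboring ($D\sim D'$) if one is obtained from the other by adding or removing a single record in $[0,1]^2$. A randomized mechanism $\mathcal{M}$ satisfies $\varepsilon$-differential privacy (pure DP) if for all neighboring $D\sim D'$ and all measurable sets $S$ of outputs, $\Pr[\mathcal{M}(D)\in S]\le e^{\varepsilon}\Pr[\mathcal{M}(D')\in S]$. *)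

theory Defs
  imports "HOL-Probability.Probability"
begin

definition laplace_density :: "real \<Rightarrow> real \<Rightarrow> real" where
  "laplace_density b z = exp (- \<bar>z\<bar> / b) / (2 * b)"

definition laplace_measure :: "real \<Rightarrow> real measure" where
  "laplace_measure b = density lborel (\<lambda>z. ennreal (laplace_density b z))"

definition valid_dataset :: "(real \<times> real) multiset \<Rightarrow> bool" where
  "valid_dataset D \<longleftrightarrow> (\<forall>r \<in># D. fst r \<in> {0..1} \<and> snd r \<in> {0..1})"

definition neighboring :: "(real \<times> real) multiset \<Rightarrow> (real \<times> real) multiset \<Rightarrow> bool" where
  "neighboring D D' \<longleftrightarrow> valid_dataset D \<and> valid_dataset D' \<and>
     (\<exists>r. fst r \<in> {0..1} \<and> snd r \<in> {0..1} \<and> (D' = D + {#r#} \<or> D = D' + {#r#}))"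

definition S_x2 :: "(real \<times> real) multiset \<Rightarrow> real" where
  "S_x2 D = (\<Sum>r\<in>#D. (fst r)\<^sup>2)"

definition S_x_minus_x2 :: "(real \<times> real) multiset \<Rightarrow> real" where
  "S_x_minus_x2 D = (\<Sum>r\<in>#D. fst r - (fst r)\<^sup>2)"

definition S_1_minus_x :: "(real \<times> real) multiset \<Rightarrow> real" where
  "S_1_minus_x D = (\<Sum>r\<in>#D. 1 - fst r)"

definition mech :: "real \<Rightarrow> (real \<times> real) multiset \<Rightarrow> (real \<times> real \<times> real) measure" where
  "mech eps1 D = distr
     (laplace_measure (1/eps1) \<Otimes>\<^sub>M (laplace_measure (1/eps1) \<Otimes>\<^sub>M laplace_measure (1/eps1)))
     borel
     (\<lambda>(z1, z2, z3). (S_x2 D + z1, S_x_minus_x2 D + z2, S_1_minus_x D + z3))"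

definition pure_dp :: "real \<Rightarrow> ('d \<Rightarrow> 'd \<Rightarrow> bool) \<Rightarrow> ('d \<Rightarrow> 'o measure) \<Rightarrow> bool" where
  "pure_dp eps nb M \<longleftrightarrow>
     (\<forall>D D'. nb D D' \<longrightarrow> (\<forall>S \<in> sets (M D). emeasure (M D) S \<le> ennreal (exp eps) * emeasure (M D') S))"

end

theory Submission
  imports Defs
begin

text \<open>
  Each record r = (x, y) contributes (x^2, x - x^2, 1 - x) to the released statistics. For
  x \<in> [0,1] these three numbers are nonnegative and sum to 1, so adding or removing a record
  moves the statistics by exactly 1 in the L1 norm. The output density is a product of three
  Laplace densities of scale 1/\<epsilon> centred at the statistics, and shifting the centre of
  such a product by L1 distance \<delta> changes the density by a factor of at most
  exp (\<epsilon> \<delta>) pointwise; integrating this pointwise bound over any event gives \<epsilon>-DP.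
\<close>

lemma pure_dp_density:
  assumes "\<And>D. M D = density N (f D)"
    and "\<And>D. f D \<in> borel_measurable N"
    and "\<And>D D' x. nb D D' \<Longrightarrow> f D x \<le> ennreal (exp eps) * f D' x"
  shows "pure_dp eps nb M"
  unfolding pure_dp_def
proof (intro allI impI ballI)
  fix D D' S
  assume nb: "nb D D'" and "S \<in> sets (M D)"
  then have S: "S \<in> sets N" by (simp add: assms(1))
  have "emeasure (M D) S = (\<integral>\<^sup>+ x. f D x * indicator S x \<partial>N)"
    using S by (simp add: assms(1,2) emeasure_density)
  also have "\<dots> \<le> (\<integral>\<^sup>+ x. ennreal (exp eps) * (f D' x * indicator S x) \<partial>N)"
    by (intro nn_integral_mono) (simp add: indicator_def assms(3)[OF nb])
  also have "\<dots> = ennreal (exp eps) * (\<integral>\<^sup>+ x. f D' x * indicator S x \<partial>N)"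
    using S assms(2) by (intro nn_integral_cmult) auto
  also have "\<dots> = ennreal (exp eps) * emeasure (M D') S"
    using S by (simp add: assms(1,2) emeasure_density)
  finally show "emeasure (M D) S \<le> ennreal (exp eps) * emeasure (M D') S" .
qed

lemma density_lborel_translate:
  fixes a :: "'a::euclidean_space"
  assumes [measurable]: "f \<in> borel_measurable borel"
  shows "distr (density lborel f) borel ((+) a) = density lborel (\<lambda>y. f (y - a))"
proof -
  have "distr (density lborel f) borel ((+) a)
      = distr (density lborel (\<lambda>x. f ((a + x) - a))) borel ((+) a)"
    by simp
  also have "\<dots> = density (distr lborel borel ((+) a)) (\<lambda>y. f (y - a))"
    by (rule density_distr[symmetric]) auto
  finally show ?thesis
    by (simp add: lborel_distr_plus)
qed

lemma density_lborel_pair: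
  fixes f :: "'a::euclidean_space \<Rightarrow> real" and g :: "'b::euclidean_space \<Rightarrow> real"
  assumes [measurable]: "f \<in> borel_measurable borel" "g \<in> borel_measurable borel"
    and "\<And>x. 0 \<le> f x" "\<And>y. 0 \<le> g y"
  shows "density lborel f \<Otimes>\<^sub>M density lborel g = density lborel (\<lambda>p. ennreal (f (fst p) * g (snd p)))"
proof -
  have "sigma_finite_measure (density lborel (\<lambda>y. ennreal (g y)))"
    by (subst sigma_finite_measure.sigma_finite_iff_density_finite[OF sigma_finite_lborel]) auto
  then have "density lborel f \<Otimes>\<^sub>M density lborel g
      = density (lborel \<Otimes>\<^sub>M lborel) (\<lambda>(x, y). ennreal (f x) * ennreal (g y))"
    by (intro pair_measure_density) (auto simp: sigma_finite_lborel)
  moreover have "(\<lambda>(x, y). ennreal (f x) * ennreal (g y)) = (\<lambda>p. ennreal (f (fst p) * g (snd p)))"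
    by (auto simp: ennreal_mult assms(3,4))
  ultimately show ?thesis
    by (simp only: lborel_prod)
qed

lemma laplace_density_nonneg: "0 \<le> b \<Longrightarrow> 0 \<le> laplace_density b z"
  by (simp add: laplace_density_def)

lemma borel_measurable_laplace_density [measurable]: "laplace_density b \<in> borel_measurable borel"
  unfolding laplace_density_def by measurable

lemma laplace_density_shift_le:
  assumes "0 < b"
  shows "laplace_density b (z - a) \<le> exp (\<bar>a - a'\<bar> / b) * laplace_density b (z - a')"
proof -
  have "(\<bar>z - a'\<bar> - \<bar>a - a'\<bar>) / b \<le> \<bar>z - a\<bar> / b"
    using assms by (intro divide_right_mono) auto
  then have "- \<bar>z - a\<bar> / b \<le> \<bar>a - a'\<bar> / b + - \<bar>z - a'\<bar> / b"
    by (simp add: diff_divide_distrib)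
  then have "exp (- \<bar>z - a\<bar> / b) \<le> exp (\<bar>a - a'\<bar> / b) * exp (- \<bar>z - a'\<bar> / b)"
    by (simp flip: exp_add)
  then show ?thesis
    using assms by (simp add: laplace_density_def divide_right_mono)
qed

definition l1_norm3 :: "real \<times> real \<times> real \<Rightarrow> real" where
  "l1_norm3 v = \<bar>fst v\<bar> + \<bar>fst (snd v)\<bar> + \<bar>snd (snd v)\<bar>"

definition laplace3_density :: "real \<Rightarrow> real \<times> real \<times> real \<Rightarrow> real" where
  "laplace3_density b v =
     laplace_density b (fst v) * (laplace_density b (fst (snd v)) * laplace_density b (snd (snd v)))"

lemma laplace3_density_nonneg: "0 \<le> b \<Longrightarrow> 0 \<le> laplace3_density b v"
  by (simp add: laplace3_density_def laplace_density_nonneg)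

lemma borel_measurable_laplace3_density [measurable]:
  "laplace3_density b \<in> borel_measurable borel"
  unfolding laplace3_density_def by (simp flip: borel_prod) measurable

lemma laplace_measure_triple_density:
  assumes "0 \<le> b"
  shows "laplace_measure b \<Otimes>\<^sub>M (laplace_measure b \<Otimes>\<^sub>M laplace_measure b)
       = density lborel (\<lambda>v. ennreal (laplace3_density b v))"
proof -
  have "laplace_measure b \<Otimes>\<^sub>M laplace_measure b
      = density lborel (\<lambda>w. ennreal (laplace_density b (fst w) * laplace_density b (snd w)))"
    unfolding laplace_measure_def
    using assms by (intro density_lborel_pair) (auto simp: laplace_density_nonneg)
  then show ?thesis
    unfolding laplace_measure_def
    using assms
    by (auto simp: laplace_density_nonneg laplace3_density_def density_lborel_pair
             simp flip: borel_prod)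
qed

lemma laplace3_density_shift_le:
  assumes "0 < b"
  shows "laplace3_density b (v - a) \<le> exp (l1_norm3 (a - a') / b) * laplace3_density b (v - a')"
proof -
  let ?p = "laplace_density b"
  let ?e = "\<lambda>t. exp (\<bar>t\<bar> / b)"
  have nonneg: "0 \<le> ?p t" for t
    using assms by (simp add: laplace_density_nonneg)
  have shift: "?p (z - c) \<le> ?e (c - c') * ?p (z - c')" for z c c'
    using laplace_density_shift_le[OF assms] .
  have "laplace3_density b (v - a)
      \<le> ?e (fst a - fst a') * ?p (fst v - fst a')
        * (?e (fst (snd a) - fst (snd a')) * ?p (fst (snd v) - fst (snd a'))
          * (?e (snd (snd a) - snd (snd a')) * ?p (snd (snd v) - snd (snd a'))))"
    unfolding laplace3_density_def fst_diff snd_diff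
    by (intro mult_mono shift nonneg mult_nonneg_nonneg) auto
  also have "\<dots> = exp (l1_norm3 (a - a') / b) * laplace3_density b (v - a')"
    by (simp add: l1_norm3_def laplace3_density_def add_divide_distrib exp_add mult_ac)
  finally show ?thesis .
qed

definition stats :: "(real \<times> real) multiset \<Rightarrow> real \<times> real \<times> real" where
  "stats D = (S_x2 D, S_x_minus_x2 D, S_1_minus_x D)"

definition record_stats :: "real \<times> real \<Rightarrow> real \<times> real \<times> real" where
  "record_stats r = ((fst r)\<^sup>2, fst r - (fst r)\<^sup>2, 1 - fst r)"

lemma stats_add_mset: "stats (add_mset r D) = stats D + record_stats r"
  by (simp add: stats_def record_stats_def S_x2_def S_x_minus_x2_def S_1_minus_x_def)

lemma l1_norm3_record_stats:
  assumes "fst r \<in> {0..1}"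
  shows "l1_norm3 (record_stats r) = 1"
proof -
  have "(fst r)\<^sup>2 \<le> fst r"
    using assms by (simp add: power2_eq_square mult_left_le_one_le)
  then show ?thesis
    using assms by (simp add: l1_norm3_def record_stats_def)
qed

lemma l1_norm3_stats_neighboring:
  assumes "neighboring D D'"
  shows "l1_norm3 (stats D - stats D') = 1"
proof -
  obtain r where r: "fst r \<in> {0..1}" and "D' = D + {#r#} \<or> D = D' + {#r#}"
    using assms unfolding neighboring_def by blast
  then consider "stats D - stats D' = - record_stats r" | "stats D - stats D' = record_stats r"
    by (auto simp: stats_add_mset)
  then show ?thesis
    using l1_norm3_record_stats[OF r] by cases (simp_all add: l1_norm3_def)
qed

lemma mech_eq_density:
  assumes "0 < eps"
  shows "mech eps D = density lborel (\<lambda>v. ennreal (laplace3_density (1/eps) (v - stats D)))"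
proof -
  have "(\<lambda>(z1, z2, z3). (S_x2 D + z1, S_x_minus_x2 D + z2, S_1_minus_x D + z3)) = (+) (stats D)"
    by (auto simp: stats_def)
  then show ?thesis
    using assms unfolding mech_def
    by (simp add: laplace_measure_triple_density density_lborel_translate)
qed

theorem mainTheorem3:
  fixes eps1 :: real
  assumes "eps1 > 0"
  shows "pure_dp eps1 neighboring (mech eps1)"
proof (rule pure_dp_density)
  show "mech eps1 D = density lborel (\<lambda>v. ennreal (laplace3_density (1/eps1) (v - stats D)))" for D
    using assms by (rule mech_eq_density)
  show "(\<lambda>v. ennreal (laplace3_density (1/eps1) (v - stats D))) \<in> borel_measurable lborel" for D
    by simp
  fix D D' v
  assume "neighboring D D'"
  then have "laplace3_density (1/eps1) (v - stats D) \<le> exp eps1 * laplace3_density (1/eps1) (v - stats D')"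
    using laplace3_density_shift_le[of "1/eps1" v "stats D" "stats D'"] assms
    by (simp add: l1_norm3_stats_neighboring)
  then show "ennreal (laplace3_density (1/eps1) (v - stats D))
      \<le> ennreal (exp eps1) * ennreal (laplace3_density (1/eps1) (v - stats D'))"
    using assms by (simp add: ennreal_leI laplace3_density_nonneg flip: ennreal_mult)
qed

end
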